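(* Let $n\ge K\ge 1$ and $L\ge 1$ be integers and $\rho\in(0,1]$. Let $\Pi_r,\Pi_c\in[0,1]^{n\times K}$ be matrices whose rows each have $\ell_1$-norm $1$, and suppose there are index sets $\mathcal{I}_r,\mathcal{I}_c\subseteq[n]$ of size $K$ with $\Pi_r(\mathcal{I}_r,:)=I_{K\times K}$ and $\Pi_c(\mathcal{I}_c,:)=I_{K\times K}$. Let $B_1,\dots,B_L\in[0,1]^{K\times K}$, set $\Omega_l=\rho\,\Pi_r B_l\Pi_c'$ for $l\in[L]$, and define $\tilde S_r=\sum_{l\in[L]}\Omega_l\Omega_l'$ and $\tilde S_c=\sum_{l\in[L]}\Omega_l'\Omega_l$. Suppose that $\mathrm{rank}(\sum_{l\in[L]}B_lB_l')=K$ and $\mathrm{rank}(\sum_{l\in[L]}B_l'B_l)=K$. Then: (i) if $U_r\in\mathbb{R}^{n\times K}$ is a matrix whose columns are eigenvectors of $\tilde S_r$ associated with its $K$ largest eigenvalues in absolute value, with $U_r'U_r=I_{K\times K}$, then $U_r=\Pi_r U_r(\mathcal{I}_r,:)$; (ii) if $U_c\in\mathbb{R}^{n\times K}$ is a matrix whose columns are eigenvectors of $\tilde S_c$ associated with its $K$ largest eigenvalues in absolute value, with $U_c'U_c=I_{K\times K}$, then $U_c=\Pi_c U_c(\mathcal{I}_c,:)$.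
   Context: For a matrix $M$ and index set $S$, $M(S,:)$ denotes the submatrix formed by the rows of $M$ indexed by $S$ (in the order of $S$); $M'$ is the transpose; $[q]=\{1,\dots,q\}$. This is the population setting of the multi-layer mixed membership stochastic co-block model, where $\Pi_r$ and $\Pi_c$ are the row (sending) and column (receiving) membership matrices and $\mathcal{I}_r,\mathcal{I}_c$ index pure nodes. *)

theory Defs
  imports "HOL-Analysis.Analysis"
begin

definition diag_mat :: "real^'n \<Rightarrow> real^'n^'n" where
  "diag_mat d = (\<chi> i j. if i = j then d $ i else 0)"

text \<open>Row submatrix M(S,:) where the ordered index set S is given by an
  injective map from the K row positions into the row indices of M.\<close>
definition row_sel :: "'a^'k^'n \<Rightarrow> ('m \<Rightarrow> 'n) \<Rightarrow> 'a^'k^'m" where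
  "row_sel M s = (\<chi> i. M $ s i)"

text \<open>U (n x K) consists of eigenvectors of the symmetric matrix S associated with
  the K largest eigenvalues of S in absolute value: U is obtained by selecting K
  columns of an orthonormal eigen-decomposition S = V diag(mu) V' such that every
  selected eigenvalue is at least as large in absolute value as every
  non-selected one.\<close>
definition top_abs_eigvecs :: "real^'n^'n \<Rightarrow> real^'k^'n \<Rightarrow> bool" where
  "top_abs_eigvecs S U \<longleftrightarrow>
     (\<exists>V mu (c :: 'k \<Rightarrow> 'n).
        orthogonal_matrix V \<and> S = V ** diag_mat mu ** transpose V \<and> inj c \<and>
        (\<forall>k. column k U = column (c k) V) \<and>
        (\<forall>k j. j \<notin> range c \<longrightarrow> \<bar>mu $ j\<bar> \<le> \<bar>mu $ (c k)\<bar>))"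

end

theory Submission
  imports Defs
begin

(* Write Omega_l = P_r B_l Q' with Q = rho P_c. Then S_r = P_r M P_r' with
   M = sum_l (B_l Q')(B_l Q')', whose kernel is that of sum_l B_l B_l' because Q is injective;
   so M is invertible. The pure rows make P_r injective and P_r' surjective, hence
   range S_r = range P_r has dimension K. Therefore the K eigenvalues of largest modulus are
   nonzero, the selected eigenvectors lie in range S_r = range P_r, i.e. U_r = P_r Y, and
   restricting to the pure rows gives Y = U_r(I_r,:). Part (ii) is part (i) for the
   transposed model Omega_l' = P_c B_l' (rho P_r)'. *)

lemma matrix_vector_mult_sum_left:
  fixes A :: "'i \<Rightarrow> real^'m^'n"
  shows "(\<Sum>l\<in>F. A l) *v x = (\<Sum>l\<in>F. A l *v x)"
  by (induction F rule: infinite_finite_induct) (auto simp: matrix_vector_mult_add_rdistrib)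

lemma matrix_mul_sum_left:
  fixes A :: "'i \<Rightarrow> real^'m^'n" and B :: "real^'p^'m"
  shows "(\<Sum>l\<in>F. A l) ** B = (\<Sum>l\<in>F. A l ** B)"
  by (induction F rule: infinite_finite_induct)
    (auto simp: vec_eq_iff matrix_matrix_mult_def sum.distrib distrib_right)

lemma matrix_mul_sum_right:
  fixes A :: "real^'m^'n" and B :: "'i \<Rightarrow> real^'p^'m"
  shows "A ** (\<Sum>l\<in>F. B l) = (\<Sum>l\<in>F. A ** B l)"
  by (induction F rule: infinite_finite_induct) (auto simp: matrix_add_ldistrib)

lemma gram_sum_mult_eq_0_iff:
  fixes A :: "'i \<Rightarrow> real^'m^'n"
  assumes "finite F"
  shows "(\<Sum>l\<in>F. A l ** transpose (A l)) *v x = 0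
    \<longleftrightarrow> (\<forall>l\<in>F. transpose (A l) *v x = 0)"
proof
  have "x \<bullet> ((A l ** transpose (A l)) *v x) = (norm (transpose (A l) *v x))\<^sup>2" for l
    by (simp add: matrix_vector_mul_assoc[symmetric] dot_lmul_matrix[symmetric]
        power2_norm_eq_inner inner_commute del: transpose_matrix_vector)
  then have quadratic_form:
    "x \<bullet> ((\<Sum>l\<in>F. A l ** transpose (A l)) *v x)
      = (\<Sum>l\<in>F. (norm (transpose (A l) *v x))\<^sup>2)"
    by (simp add: matrix_vector_mult_sum_left inner_sum_right)
  assume "(\<Sum>l\<in>F. A l ** transpose (A l)) *v x = 0"
  then have "(\<Sum>l\<in>F. (norm (transpose (A l) *v x))\<^sup>2) = 0"
    using quadratic_form by simp
  then show "\<forall>l\<in>F. transpose (A l) *v x = 0"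
    by (simp add: sum_nonneg_eq_0_iff[OF assms])
next
  assume "\<forall>l\<in>F. transpose (A l) *v x = 0"
  then show "(\<Sum>l\<in>F. A l ** transpose (A l)) *v x = 0"
    by (simp add: matrix_vector_mult_sum_left matrix_vector_mul_assoc[symmetric]
        del: transpose_matrix_vector)
qed

lemma diag_mat_mult_vector: "diag_mat d *v x = (\<chi> j. d $ j * x $ j)"
  by (auto simp: vec_eq_iff diag_mat_def matrix_vector_mult_def if_distrib[of "\<lambda>z. z * _"]
      cong: if_cong)

lemma rank_diag_decomp_le:
  fixes V :: "real^'n^'m"
  shows "rank (V ** diag_mat mu ** transpose V) \<le> card {j. mu $ j \<noteq> 0}"
proof -
  let ?T = "(\<lambda>j. column j V) ` {j. mu $ j \<noteq> 0}"
  have "(V ** diag_mat mu ** transpose V) *v x \<in> span ?T" for x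
  proof -
    have "(V ** diag_mat mu ** transpose V) *v x = V *v (diag_mat mu *v (transpose V *v x))"
      by (simp add: matrix_vector_mul_assoc matrix_mul_assoc del: transpose_matrix_vector)
    also have "\<dots> = (\<Sum>j\<in>UNIV. (mu $ j * (transpose V *v x) $ j) *s column j V)"
      by (simp add: matrix_mult_sum[of V] diag_mat_mult_vector del: transpose_matrix_vector)
    also have "\<dots> \<in> span ?T"
    proof (rule span_sum)
      fix j
      show "(mu $ j * (transpose V *v x) $ j) *s column j V \<in> span ?T"
        by (cases "mu $ j = 0")
          (auto simp: scalar_mult_eq_scaleR intro: span_scale span_base span_zero)
    qed
    finally show ?thesis .
  qed
  then have "rank (V ** diag_mat mu ** transpose V) \<le> card ?T"
    unfolding rank_dim_range by (intro dim_le_card) auto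
  also have "\<dots> \<le> card {j. mu $ j \<noteq> 0}"
    by (rule card_image_le) simp
  finally show ?thesis .
qed

lemma diag_decomp_mult_column:
  fixes V :: "real^'n^'n"
  assumes "transpose V ** V = mat 1"
  shows "(V ** diag_mat mu ** transpose V) *v column j V = mu $ j *\<^sub>R column j V"
proof -
  have "(V ** diag_mat mu ** transpose V) *v column j V
      = V *v (diag_mat mu *v ((transpose V ** V) *v axis j 1))"
    by (simp add: matrix_vector_mult_basis[symmetric] matrix_vector_mul_assoc matrix_mul_assoc)
  also have "diag_mat mu *v ((transpose V ** V) *v axis j 1) = mu $ j *\<^sub>R axis j 1"
    by (simp add: assms diag_mat_mult_vector vec_eq_iff axis_def)
  finally show ?thesis
    by (simp add: matrix_vector_mult_basis vector_scaleR_matrix_ac[symmetric]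
        matrix_vector_mult_scaleR)
qed

text \<open>A selected eigenvalue cannot vanish: otherwise every non-selected one vanishes as
  well, leaving fewer than CARD('k) nonzero eigenvalues.\<close>

lemma top_abs_eigvecs_column_in_range:
  fixes S :: "real^'n^'n" and U :: "real^'k^'n"
  assumes top: "top_abs_eigvecs S U" and rank: "CARD('k) \<le> rank S"
  shows "column k U \<in> range ((*v) S)"
proof -
  obtain V mu c where V: "orthogonal_matrix V" and S: "S = V ** diag_mat mu ** transpose V"
    and U: "\<forall>k. column k U = column (c k) V"
    and top_abs: "\<forall>k j. j \<notin> range c \<longrightarrow> \<bar>mu $ j\<bar> \<le> \<bar>mu $ (c k)\<bar>"
    using top unfolding top_abs_eigvecs_def by blast
  have "mu $ c k \<noteq> 0"
  proof
    assume "mu $ c k = 0"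
    have nonzero: "{j. mu $ j \<noteq> 0} \<subseteq> c ` (UNIV - {k})"
    proof
      fix j
      assume j: "j \<in> {j. mu $ j \<noteq> 0}"
      have "j \<in> range c"
      proof (rule ccontr)
        assume "j \<notin> range c"
        then have "\<bar>mu $ j\<bar> \<le> \<bar>mu $ c k\<bar>"
          using top_abs by blast
        with j \<open>mu $ c k = 0\<close> show False
          by simp
      qed
      with j \<open>mu $ c k = 0\<close> show "j \<in> c ` (UNIV - {k})"
        by blast
    qed
    have "card {j. mu $ j \<noteq> 0} \<le> card (c ` (UNIV - {k}))"
      using nonzero by (simp add: card_mono)
    also have "\<dots> \<le> card (UNIV - {k})"
      by (rule card_image_le) simp
    also have "\<dots> = CARD('k) - 1"
      by (simp add: card_Diff_singleton)
    finally show False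
      using rank rank_diag_decomp_le[of V mu] zero_less_card_finite[where 'a='k]
      unfolding S by linarith
  qed
  then have "column k U = S *v ((1 / mu $ c k) *\<^sub>R column (c k) V)"
    using V S U by (simp add: orthogonal_matrix_def diag_decomp_mult_column matrix_scaleR_vector_ac
        scaleR_matrix_vector_assoc[symmetric])
  then show ?thesis
    by blast
qed

lemma row_sel_matrix_mul: "row_sel (A ** B) s = row_sel A s ** B"
  by (simp add: vec_eq_iff row_sel_def matrix_matrix_mult_def)

lemma row_sel_matrix_vector_mult: "row_sel A s *v x = (\<chi> i. (A *v x) $ s i)"
  by (simp add: vec_eq_iff row_sel_def matrix_vector_mult_def)

lemma inj_matrix_vector_mult_if_row_sel_eq_mat_1:
  assumes "row_sel P I = mat 1"
  shows "inj ((*v) P)"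
proof (rule injI)
  fix x y
  assume "P *v x = P *v y"
  then have "row_sel P I *v x = row_sel P I *v y"
    by (simp add: row_sel_matrix_vector_mult)
  then show "x = y"
    using assms by simp
qed

lemma eq_matrix_mul_if_columns_in_range:
  fixes U :: "real^'k^'n" and P :: "real^'m^'n"
  assumes "\<And>k. column k U \<in> range ((*v) P)"
  obtains Y where "U = P ** Y"
proof -
  have "\<forall>k. \<exists>y. column k U = P *v y"
    using assms by blast
  then obtain y where y: "\<And>k. column k U = P *v y k"
    by metis
  have "U = P ** (\<chi> i k. y k $ i)"
    using y by (simp add: vec_eq_iff column_def matrix_matrix_mult_def matrix_vector_mult_def)
  then show thesis
    by (rule that)
qed

lemma eq_mult_row_sel_if_eq_matrix_mul:
  assumes "row_sel P I = mat 1" "U = P ** Y"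
  shows "U = P ** row_sel U I"
  using assms by (simp add: row_sel_matrix_mul)

lemma range_matrix_mul_surj_right:
  assumes "surj ((*v) B)"
  shows "range ((*v) (A ** B)) = range ((*v) A)"
proof -
  have "range ((*v) (A ** B)) = (*v) A ` range ((*v) B)"
    by (simp add: image_image matrix_vector_mul_assoc)
  then show ?thesis
    using assms by (simp only:)
qed

lemma top_abs_eigvecs_congruence_eq_mult_row_sel:
  fixes P U :: "real^'k^'n" and M :: "real^'k^'k"
  assumes P: "row_sel P I = mat 1" and M: "rank M = CARD('k)"
    and top: "top_abs_eigvecs (P ** M ** transpose P) U"
  shows "U = P ** row_sel U I"
proof -
  have "inj ((*v) P)"
    using P by (rule inj_matrix_vector_mult_if_row_sel_eq_mat_1)
  then have rank_P: "rank P = CARD('k)"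
    by (simp add: full_rank_injective)
  then have "surj ((*v) (transpose P))"
    by (metis full_rank_surjective rank_transpose)
  moreover have "surj ((*v) M)"
    using M by (simp add: full_rank_surjective)
  ultimately have range: "range ((*v) (P ** M ** transpose P)) = range ((*v) P)"
    by (simp add: range_matrix_mul_surj_right)
  then have "rank (P ** M ** transpose P) = CARD('k)"
    using rank_P by (simp add: rank_dim_range)
  then have "column k U \<in> range ((*v) P)" for k
    using top_abs_eigvecs_column_in_range[OF top] range by simp
  then obtain Y where "U = P ** Y"
    by (rule eq_matrix_mul_if_columns_in_range)
  with P show ?thesis
    by (rule eq_mult_row_sel_if_eq_matrix_mul)
qed

lemma gram_sum_matrix_mul_left:
  fixes P :: "real^'k^'n" and C :: "'i \<Rightarrow> real^'m^'k"
  shows "(\<Sum>l\<in>F. (P ** C l) ** transpose (P ** C l))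
    = P ** (\<Sum>l\<in>F. C l ** transpose (C l)) ** transpose P"
  by (simp add: matrix_mul_sum_left matrix_mul_sum_right matrix_transpose_mul matrix_mul_assoc)

lemma rank_gram_sum_mult_transpose:
  fixes B :: "'i \<Rightarrow> real^'k^'k" and Q :: "real^'k^'m"
  assumes F: "finite F" and Q: "inj ((*v) Q)"
    and B: "rank (\<Sum>l\<in>F. B l ** transpose (B l)) = CARD('k)"
  shows "rank (\<Sum>l\<in>F. (B l ** transpose Q) ** transpose (B l ** transpose Q)) = CARD('k)"
proof -
  have "y = 0"
    if y: "(\<Sum>l\<in>F. (B l ** transpose Q) ** transpose (B l ** transpose Q)) *v y = 0" for y
  proof -
    have "Q *v (transpose (B l) *v y) = 0" if "l \<in> F" for l
      using that y gram_sum_mult_eq_0_iff[OF F, of "\<lambda>l. B l ** transpose Q"]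
      by (simp add: matrix_transpose_mul matrix_vector_mul_assoc del: transpose_matrix_vector)
    then have "\<forall>l\<in>F. transpose (B l) *v y = 0"
      using Q by (metis injD matrix_vector_mult_0_right)
    then have "(\<Sum>l\<in>F. B l ** transpose (B l)) *v y = 0"
      using gram_sum_mult_eq_0_iff[OF F] by blast
    then show "y = 0"
      using B matrix_nonfull_linear_equations_eq by blast
  qed
  then show ?thesis
    using matrix_nonfull_linear_equations_eq by blast
qed

lemma top_abs_eigvecs_gram_sum_eq_mult_row_sel:
  fixes P U :: "real^'k^'n" and Q :: "real^'k^'m" and B :: "'i \<Rightarrow> real^'k^'k"
  assumes F: "finite F" and P: "row_sel P I = mat 1" and Q: "inj ((*v) Q)"
    and B: "rank (\<Sum>l\<in>F. B l ** transpose (B l)) = CARD('k)"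
    and top: "top_abs_eigvecs
      (\<Sum>l\<in>F. (P ** B l ** transpose Q) ** transpose (P ** B l ** transpose Q)) U"
  shows "U = P ** row_sel U I"
proof (rule top_abs_eigvecs_congruence_eq_mult_row_sel[OF P])
  show "rank (\<Sum>l\<in>F. (B l ** transpose Q) ** transpose (B l ** transpose Q)) = CARD('k)"
    using F Q B by (rule rank_gram_sum_mult_transpose)
  show "top_abs_eigvecs
      (P ** (\<Sum>l\<in>F. (B l ** transpose Q) ** transpose (B l ** transpose Q)) ** transpose P) U"
    using top by (simp add: gram_sum_matrix_mul_left[symmetric] matrix_mul_assoc)
qed

theorem lemma1:
  fixes Pr Pc :: "real^'k^'n"
    and Ir Ic :: "'k \<Rightarrow> 'n"
    and B :: "nat \<Rightarrow> real^'k^'k"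
    and L :: nat and rho :: real
  assumes nK: "CARD('k) \<le> CARD('n)"
    and L: "L \<ge> 1"
    and rho: "0 < rho" "rho \<le> 1"
    and Pr_ent: "\<forall>i j. 0 \<le> Pr $ i $ j \<and> Pr $ i $ j \<le> 1"
    and Pc_ent: "\<forall>i j. 0 \<le> Pc $ i $ j \<and> Pc $ i $ j \<le> 1"
    and Pr_row: "\<forall>i. (\<Sum>j\<in>UNIV. Pr $ i $ j) = 1"
    and Pc_row: "\<forall>i. (\<Sum>j\<in>UNIV. Pc $ i $ j) = 1"
    and Ir: "inj Ir" "row_sel Pr Ir = mat 1"
    and Ic: "inj Ic" "row_sel Pc Ic = mat 1"
    and B_ent: "\<forall>l\<in>{1..L}. \<forall>a b. 0 \<le> B l $ a $ b \<and> B l $ a $ b \<le> 1"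
    and rank_r: "rank (\<Sum>l\<in>{1..L}. B l ** transpose (B l)) = CARD('k)"
    and rank_c: "rank (\<Sum>l\<in>{1..L}. transpose (B l) ** B l) = CARD('k)"
  shows
    "(\<forall>Ur :: real^'k^'n.
        top_abs_eigvecs
          (\<Sum>l\<in>{1..L}. (rho *\<^sub>R (Pr ** B l ** transpose Pc)) **
                          transpose (rho *\<^sub>R (Pr ** B l ** transpose Pc))) Ur
        \<and> transpose Ur ** Ur = mat 1
        \<longrightarrow> Ur = Pr ** row_sel Ur Ir)
     \<and>
     (\<forall>Uc :: real^'k^'n.
        top_abs_eigvecs
          (\<Sum>l\<in>{1..L}. transpose (rho *\<^sub>R (Pr ** B l ** transpose Pc)) **
                          (rho *\<^sub>R (Pr ** B l ** transpose Pc))) Uc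
        \<and> transpose Uc ** Uc = mat 1
        \<longrightarrow> Uc = Pc ** row_sel Uc Ic)"
proof -
  have inj_scaled: "inj ((*v) (rho *\<^sub>R P))"
    if "row_sel P I = mat 1" for P :: "real^'k^'n" and I
    using inj_matrix_vector_mult_if_row_sel_eq_mat_1[OF that] rho
    by (simp add: inj_on_def scaleR_matrix_vector_assoc[symmetric])
  have Omega: "rho *\<^sub>R (Pr ** B l ** transpose Pc)
      = Pr ** B l ** transpose (rho *\<^sub>R Pc)" for l
    by (simp add: transpose_scalar matrix_scalar_ac scalar_matrix_assoc)
  have Omega_transpose: "transpose (rho *\<^sub>R (Pr ** B l ** transpose Pc))
      = Pc ** transpose (B l) ** transpose (rho *\<^sub>R Pr)" for l
    by (simp add: transpose_scalar matrix_scalar_ac scalar_matrix_assoc matrix_transpose_mul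
        matrix_mul_assoc)
  have Omega_gram:
    "transpose (rho *\<^sub>R (Pr ** B l ** transpose Pc)) ** (rho *\<^sub>R (Pr ** B l ** transpose Pc))
      = (Pc ** transpose (B l) ** transpose (rho *\<^sub>R Pr))
        ** transpose (Pc ** transpose (B l) ** transpose (rho *\<^sub>R Pr))" for l
    by (simp only: Omega_transpose[symmetric] transpose_transpose)
  have rank_c': "rank (\<Sum>l\<in>{1..L}. transpose (B l) ** transpose (transpose (B l))) = CARD('k)"
    using rank_c by simp
  show ?thesis
    using top_abs_eigvecs_gram_sum_eq_mult_row_sel
        [OF finite_atLeastAtMost Ir(2) inj_scaled[OF Ic(2)] rank_r]
      top_abs_eigvecs_gram_sum_eq_mult_row_sel
        [OF finite_atLeastAtMost Ic(2) inj_scaled[OF Ir(2)] rank_c']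
    unfolding Omega_gram unfolding Omega by blast
qed

end
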